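(* For every $m\ge 1$ and every $m$-by-$2m$ disjoint matrix $M$, there are pairwise incomparable strings $\sigma_0,\tau_0,\dots,\sigma_{m-1},\tau_{m-1}$ such that $\sigma_i$ and $\tau_i$ are entries of the row $M(i)$ for every $i<m$.
   Context: Strings are finite binary strings, and $\preceq$ is the prefix relation. Two strings are incomparable if neither is a prefix of the other. An $m$-by-$n$ matrix $M$ is an array of strings $\sigma_{i,j}\in 2^{<\omega}$ for $i<m$ and $j<n$. Its $i$th row $M(i)$ is the tuple $(\sigma_{i,0},\dots,\sigma_{i,n-1})$. The matrix $M$ is disjoint if, for each $i<m$, the strings $\sigma_{i,0},\dots,\sigma_{i,n-1}$ are pairwise incomparable. *)

theory Defs
  imports Main "HOL-Library.Sublist"
begin

definition incomparable :: "bool list \<Rightarrow> bool list \<Rightarrow> bool" where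
  "incomparable \<sigma> \<tau> \<longleftrightarrow> \<not> prefix \<sigma> \<tau> \<and> \<not> prefix \<tau> \<sigma>"

text \<open>An m-by-n matrix is a function M with M i j the entry in row i, column j
(only entries with i < m and j < n matter).\<close>

definition disjoint_matrix :: "nat \<Rightarrow> nat \<Rightarrow> (nat \<Rightarrow> nat \<Rightarrow> bool list) \<Rightarrow> bool" where
  "disjoint_matrix m n M \<longleftrightarrow>
     (\<forall>i<m. \<forall>j<n. \<forall>k<n. j \<noteq> k \<longrightarrow> incomparable (M i j) (M i k))"

end

theory Submission
  imports Defs
begin

text \<open>Choose the entries greedily, always taking a longest string still available in any row
that needs more entries. A longest string x is incomparable with every other candidate except
its own prefixes, and since each row is an antichain, at most one of them lies in a given row.
So each row loses at most one candidate per chosen string, and a row of 2m pairwise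
incomparable strings still has candidates left while the 2m entries are being chosen.\<close>

definition prefix_antichain :: "bool list set \<Rightarrow> bool" where
  "prefix_antichain A \<longleftrightarrow> (\<forall>x\<in>A. \<forall>y\<in>A. x \<noteq> y \<longrightarrow> incomparable x y)"

definition incomparable_family :: "'i set \<Rightarrow> ('i \<Rightarrow> bool list set) \<Rightarrow> bool" where
  "incomparable_family I S \<longleftrightarrow>
     (\<forall>i\<in>I. \<forall>k\<in>I. \<forall>x\<in>S i. \<forall>y\<in>S k. (i, x) \<noteq> (k, y) \<longrightarrow> incomparable x y)"

lemma incomparable_sym: "incomparable x y \<Longrightarrow> incomparable y x"
  by (auto simp: incomparable_def)

lemma not_incomparable_self: "\<not> incomparable x x"
  by (simp add: incomparable_def)

lemma not_incomparable_shorter_imp_prefix: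
  assumes "\<not> incomparable x y" and "length y \<le> length x"
  shows "prefix y x"
  using assms prefix_length_prefix[of y y x] unfolding incomparable_def by auto

lemma card_prefixes_in_antichain_le_1:
  assumes "prefix_antichain A"
  shows "card {y \<in> A. prefix y x} \<le> 1"
proof -
  have "finite {y \<in> A. prefix y x}"
    by (rule finite_subset[of _ "set (prefixes x)"]) auto
  moreover have "a = b" if "a \<in> {y \<in> A. prefix y x}" "b \<in> {y \<in> A. prefix y x}" for a b
  proof -
    from that have "prefix a x" "prefix b x" "a \<in> A" "b \<in> A"
      by auto
    then have "\<not> incomparable a b"
      unfolding incomparable_def using prefix_same_cases by auto
    then show "a = b"
      using \<open>a \<in> A\<close> \<open>b \<in> A\<close> assms unfolding prefix_antichain_def by auto
  qed
  ultimately show ?thesis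
    by (auto simp: card_le_Suc0_iff_eq)
qed

lemma card_antichain_le_Suc_card_incomparable:
  assumes "prefix_antichain A" and "finite A" and "\<forall>y\<in>A. length y \<le> length x"
  shows "card A \<le> Suc (card {y \<in> A. incomparable x y})"
proof -
  have "A \<subseteq> {y \<in> A. incomparable x y} \<union> {y \<in> A. prefix y x}"
    using assms(3) not_incomparable_shorter_imp_prefix by blast
  then have "card A \<le> card ({y \<in> A. incomparable x y} \<union> {y \<in> A. prefix y x})"
    using assms(2) by (intro card_mono) auto
  also have "\<dots> \<le> card {y \<in> A. incomparable x y} + card {y \<in> A. prefix y x}"
    by (rule card_Un_le)
  finally show ?thesis
    using card_prefixes_in_antichain_le_1[OF assms(1), of x] by linarith
qed

lemma incomparable_family_insert:
  assumes "incomparable_family I S" and "\<forall>k\<in>I. \<forall>y\<in>S k. incomparable x y"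
  shows "incomparable_family I (S(r := insert x (S r)))"
  using assms unfolding incomparable_family_def by (auto intro: incomparable_sym)

lemma ex_longest_string:
  assumes "finite C" and "C \<noteq> {}"
  obtains x where "x \<in> C" and "\<forall>y\<in>C. length y \<le> length x"
proof -
  have "Max (length ` C) \<in> length ` C"
    using assms by simp
  then obtain x where "x \<in> C" and "length x = Max (length ` C)"
    by (metis imageE)
  moreover have "\<forall>y\<in>C. length y \<le> Max (length ` C)"
    using assms(1) by simp
  ultimately show ?thesis
    using that by simp
qed

lemma ex_longest_in_rows:
  assumes "finite J" and "J \<noteq> {}" and "\<forall>i\<in>J. finite (R i) \<and> R i \<noteq> {}"
  obtains r x where "r \<in> J" and "x \<in> R r" and "\<forall>i\<in>J. \<forall>y\<in>R i. length y \<le> length x"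
proof -
  have "finite (\<Union>i\<in>J. R i)" and "(\<Union>i\<in>J. R i) \<noteq> {}"
    using assms by auto
  then obtain x where "x \<in> (\<Union>i\<in>J. R i)" and "\<forall>y\<in>(\<Union>i\<in>J. R i). length y \<le> length x"
    by (rule ex_longest_string)
  then show ?thesis
    using that by blast
qed

text \<open>Rows without demand are unconstrained and may be infinite, so the selected sets must be
stated finite for their cardinalities to mean anything.\<close>

theorem incomparable_selection:
  assumes "finite I"
    and "\<forall>i\<in>I. 0 < d i \<longrightarrow> prefix_antichain (R i) \<and> finite (R i) \<and> sum d I \<le> card (R i)"
  shows "\<exists>S. (\<forall>i\<in>I. S i \<subseteq> R i \<and> finite (S i) \<and> card (S i) = d i) \<and> incomparable_family I S"
  using assms(2)
proof (induction "sum d I" arbitrary: d R)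
  case 0
  then have "\<forall>i\<in>I. d i = 0"
    using assms(1) by simp
  then show ?case
    by (intro exI[of _ "\<lambda>_. {}"]) (simp add: incomparable_family_def)
next
  case (Suc n)
  define J where "J = {i \<in> I. 0 < d i}"
  have "finite J"
    using assms(1) unfolding J_def by simp
  moreover have "J \<noteq> {}"
  proof
    assume "J = {}"
    then have "sum d I = 0"
      unfolding J_def by (auto intro: sum.neutral)
    with Suc.hyps(2) show False
      by simp
  qed
  moreover have "\<forall>i\<in>J. finite (R i) \<and> R i \<noteq> {}"
    using Suc.prems Suc.hyps(2) unfolding J_def by fastforce
  ultimately obtain r x where "r \<in> J" and x: "x \<in> R r"
    and longest: "\<forall>i\<in>J. \<forall>y\<in>R i. length y \<le> length x"
    by (rule ex_longest_in_rows)
  then have r: "r \<in> I" "0 < d r"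
    unfolding J_def by auto
  define d' where "d' = d(r := d r - 1)"
  define R' where "R' = (\<lambda>i. {y \<in> R i. incomparable x y})"
  have sum_d: "sum d I = Suc (sum d' I)"
    using r assms(1) unfolding d'_def by (simp add: sum.remove)
  have "\<forall>i\<in>I. 0 < d' i \<longrightarrow> prefix_antichain (R' i) \<and> finite (R' i) \<and> sum d' I \<le> card (R' i)"
  proof (intro ballI impI)
    fix i assume "i \<in> I" "0 < d' i"
    then have "i \<in> J"
      unfolding J_def d'_def by (auto split: if_splits)
    then have "prefix_antichain (R i)" "finite (R i)" "sum d I \<le> card (R i)"
      using Suc.prems unfolding J_def by auto
    moreover have "card (R i) \<le> Suc (card (R' i))"
      unfolding R'_def using calculation longest \<open>i \<in> J\<close>
      by (intro card_antichain_le_Suc_card_incomparable) auto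
    ultimately show "prefix_antichain (R' i) \<and> finite (R' i) \<and> sum d' I \<le> card (R' i)"
      using sum_d unfolding R'_def prefix_antichain_def by auto
  qed
  moreover have "n = sum d' I"
    using Suc.hyps(2) sum_d by simp
  ultimately obtain S' where S': "\<forall>i\<in>I. S' i \<subseteq> R' i \<and> finite (S' i) \<and> card (S' i) = d' i"
    and family: "incomparable_family I S'"
    using Suc.hyps(1) by blast
  have x_incomparable: "\<forall>k\<in>I. \<forall>y\<in>S' k. incomparable x y"
    using S' unfolding R'_def by blast
  then have "x \<notin> S' r"
    using r(1) not_incomparable_self by blast
  define S where "S = S'(r := insert x (S' r))"
  have "\<forall>i\<in>I. S i \<subseteq> R i \<and> finite (S i) \<and> card (S i) = d i"
  proof
    fix i assume "i \<in> I"
    then show "S i \<subseteq> R i \<and> finite (S i) \<and> card (S i) = d i"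
      using S' x r \<open>x \<notin> S' r\<close> unfolding S_def R'_def d'_def by auto
  qed
  moreover have "incomparable_family I S"
    unfolding S_def by (rule incomparable_family_insert[OF family x_incomparable])
  ultimately show ?case
    by blast
qed

lemma disjoint_matrix_row:
  assumes "disjoint_matrix m n M" and "i < m"
  shows "prefix_antichain (M i ` {..<n})" and "card (M i ` {..<n}) = n"
proof -
  show "prefix_antichain (M i ` {..<n})"
    using assms unfolding disjoint_matrix_def prefix_antichain_def by auto
  have "inj_on (M i) {..<n}"
    using assms not_incomparable_self unfolding disjoint_matrix_def inj_on_def
    by (metis lessThan_iff)
  then show "card (M i ` {..<n}) = n"
    by (simp add: card_image)
qed

lemma choose_two_elements:
  assumes "\<forall>i\<in>I. card (S i) = 2"
  obtains \<sigma> \<tau> where "\<forall>i\<in>I. S i = {\<sigma> i, \<tau> i} \<and> \<sigma> i \<noteq> \<tau> i"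
proof -
  have "\<forall>i\<in>I. \<exists>p. S i = {fst p, snd p} \<and> fst p \<noteq> snd p"
    using assms by (force simp: card_2_iff)
  then obtain p where "\<forall>i\<in>I. S i = {fst (p i), snd (p i)} \<and> fst (p i) \<noteq> snd (p i)"
    by (rule bchoice[THEN exE]) blast
  then show ?thesis
    by (rule that[of "fst \<circ> p" "snd \<circ> p", unfolded comp_def])
qed

theorem mainTheorem3:
  fixes m :: nat and M :: "nat \<Rightarrow> nat \<Rightarrow> bool list"
  assumes "m \<ge> 1"
    and "disjoint_matrix m (2 * m) M"
  shows "\<exists>\<sigma> \<tau> :: nat \<Rightarrow> bool list.
           (\<forall>i<m. (\<exists>j<2 * m. \<sigma> i = M i j) \<and> (\<exists>j<2 * m. \<tau> i = M i j)) \<and>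
           (\<forall>i<m. incomparable (\<sigma> i) (\<tau> i)) \<and>
           (\<forall>i<m. \<forall>k<m. i \<noteq> k \<longrightarrow>
              incomparable (\<sigma> i) (\<sigma> k) \<and> incomparable (\<sigma> i) (\<tau> k) \<and>
              incomparable (\<tau> i) (\<tau> k))"
proof -
  have "\<exists>S. (\<forall>i\<in>{..<m}. S i \<subseteq> M i ` {..<2 * m} \<and> finite (S i) \<and> card (S i) = 2)
             \<and> incomparable_family {..<m} S"
    using disjoint_matrix_row[OF assms(2)] by (intro incomparable_selection) auto
  then obtain S where S: "\<forall>i\<in>{..<m}. S i \<subseteq> M i ` {..<2 * m} \<and> card (S i) = 2"
    and family: "incomparable_family {..<m} S"
    by blast
  have "\<forall>i\<in>{..<m}. card (S i) = 2"
    using S by blast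
  then obtain \<sigma> \<tau> where \<sigma>\<tau>: "\<forall>i\<in>{..<m}. S i = {\<sigma> i, \<tau> i} \<and> \<sigma> i \<noteq> \<tau> i"
    by (rule choose_two_elements)
  have selected: "\<sigma> i \<in> S i" "\<tau> i \<in> S i" "\<sigma> i \<noteq> \<tau> i" if "i < m" for i
    using \<sigma>\<tau> that by auto
  have separated: "incomparable x y"
    if "i < m" "k < m" "x \<in> S i" "y \<in> S k" "(i, x) \<noteq> (k, y)" for i k x y
    using family that unfolding incomparable_family_def by blast
  have "\<forall>i<m. (\<exists>j<2 * m. \<sigma> i = M i j) \<and> (\<exists>j<2 * m. \<tau> i = M i j)"
    using S selected(1,2) by blast
  moreover have "\<forall>i<m. incomparable (\<sigma> i) (\<tau> i)"
    using selected separated by blast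
  moreover have "\<forall>i<m. \<forall>k<m. i \<noteq> k \<longrightarrow>
      incomparable (\<sigma> i) (\<sigma> k) \<and> incomparable (\<sigma> i) (\<tau> k) \<and> incomparable (\<tau> i) (\<tau> k)"
    using selected(1,2) separated by blast
  ultimately show ?thesis
    by blast
qed

end
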